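(* For every graph $G$ with $n$ vertices and $\mu$ maximal cliques, $$\frac{\mu}{2n}-1\le b_H(G)\le \mu-1.$$
   Context: A grid is the set of integer points of the plane; a grid edge joins two grid points at distance $1$. A path in the grid is a sequence of distinct grid edges in which consecutive edges share exactly one grid point and non-consecutive edges share none; a bend is a pair of consecutive edges of the path with different directions (horizontal/vertical). An EPG representation of a graph $G$ is a family $(P_v)_{v\in V(G)}$ of grid paths such that distinct $u,v$ are adjacent iff $P_u,P_v$ share a grid edge; it is a $B_k$-EPG representation if every path has at most $k$ bends. It is Helly if every subfamily of pairwise edge-intersecting paths has a grid edge common to all its members. The Helly-bend number $b_H(G)$ is the smallest $k$ such that $G$ admits a Helly $B_k$-EPG representation. *)

theory Defs
  imports Complex_Main
begin

type_synonym gpoint = "int \<times> int"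
type_synonym gedge = "gpoint set"

definition grid_edge :: "gedge \<Rightarrow> bool" where
  "grid_edge e \<longleftrightarrow> (\<exists>p q. e = {p, q} \<and> \<bar>fst p - fst q\<bar> + \<bar>snd p - snd q\<bar> = 1)"

definition horizontal :: "gedge \<Rightarrow> bool" where
  "horizontal e \<longleftrightarrow> (\<exists>p q. e = {p, q} \<and> p \<noteq> q \<and> snd p = snd q)"

definition grid_path :: "gedge list \<Rightarrow> bool" where
  "grid_path es \<longleftrightarrow> es \<noteq> [] \<and> distinct es \<and> (\<forall>e\<in>set es. grid_edge e) \<and>
     (\<forall>i j. i < j \<and> j < length es \<longrightarrow>
        (if j = Suc i then card (es ! i \<inter> es ! j) = 1 else es ! i \<inter> es ! j = {}))"

definition bends :: "gedge list \<Rightarrow> nat" where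
  "bends es = card {i. Suc i < length es \<and> horizontal (es ! i) \<noteq> horizontal (es ! Suc i)}"

definition epg_rep :: "'a set \<Rightarrow> ('a \<Rightarrow> 'a \<Rightarrow> bool) \<Rightarrow> ('a \<Rightarrow> gedge list) \<Rightarrow> bool" where
  "epg_rep V E P \<longleftrightarrow> (\<forall>v\<in>V. grid_path (P v)) \<and>
     (\<forall>u\<in>V. \<forall>v\<in>V. u \<noteq> v \<longrightarrow> (E u v \<longleftrightarrow> set (P u) \<inter> set (P v) \<noteq> {}))"

definition helly_rep :: "'a set \<Rightarrow> ('a \<Rightarrow> gedge list) \<Rightarrow> bool" where
  "helly_rep V P \<longleftrightarrow> (\<forall>S\<subseteq>V. (\<forall>u\<in>S. \<forall>v\<in>S. set (P u) \<inter> set (P v) \<noteq> {}) \<longrightarrow>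
      (\<exists>e. \<forall>v\<in>S. e \<in> set (P v)))"

definition helly_Bk_epg :: "nat \<Rightarrow> 'a set \<Rightarrow> ('a \<Rightarrow> 'a \<Rightarrow> bool) \<Rightarrow> ('a \<Rightarrow> gedge list) \<Rightarrow> bool" where
  "helly_Bk_epg k V E P \<longleftrightarrow> epg_rep V E P \<and> helly_rep V P \<and> (\<forall>v\<in>V. bends (P v) \<le> k)"

definition helly_bend :: "'a set \<Rightarrow> ('a \<Rightarrow> 'a \<Rightarrow> bool) \<Rightarrow> nat" where
  "helly_bend V E = (LEAST k. \<exists>P. helly_Bk_epg k V E P)"

definition clique :: "'a set \<Rightarrow> ('a \<Rightarrow> 'a \<Rightarrow> bool) \<Rightarrow> 'a set \<Rightarrow> bool" where
  "clique V E C \<longleftrightarrow> C \<subseteq> V \<and> (\<forall>u\<in>C. \<forall>v\<in>C. u \<noteq> v \<longrightarrow> E u v)"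

definition maximal_clique :: "'a set \<Rightarrow> ('a \<Rightarrow> 'a \<Rightarrow> bool) \<Rightarrow> 'a set \<Rightarrow> bool" where
  "maximal_clique V E C \<longleftrightarrow> clique V E C \<and> (\<forall>D. clique V E D \<and> C \<subseteq> D \<longrightarrow> D = C)"

end

theory Submission
  imports Defs
begin

text \<open>
  Upper bound: enumerate the maximal cliques as \<open>K 1, \<dots>, K \<mu>\<close> and route every vertex \<open>v\<close>
  along a monotone staircase whose \<open>j\<close>-th segment lies on the level \<open>(n + 1) j\<close> if
  \<open>v \<in> K j\<close>, and on a level private to \<open>v\<close> strictly between \<open>(n + 1) j\<close> and
  \<open>(n + 1) (j + 1)\<close> otherwise. Segments alternate between horizontal and vertical, so the
  staircase has \<open>\<mu> - 1\<close> bends; two staircases share an edge only on a common level, that is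
  inside a common maximal clique, and all members of \<open>K j\<close> contain the edge at the point
  \<open>((n + 1) j, (n + 1) j)\<close>. Since pairwise intersecting paths form a clique, this gives the
  Helly property.

  Lower bound: by the Helly property every maximal clique \<open>C\<close> has an edge common to all its
  paths. Sliding it backwards along its grid line, we reach a common edge whose predecessor is
  missing from some path \<open>P v\<close>, \<open>v \<in> C\<close>; this edge is the first or last edge of a straight
  segment of \<open>P v\<close>, and the vertices using it form a clique containing \<open>C\<close>, hence exactly
  \<open>C\<close>. A path with \<open>k\<close> bends has at most \<open>2 k + 2\<close> such edges, so \<open>\<mu> \<le> n (2 k + 2)\<close>.
\<close>

definition axis_point :: "bool \<Rightarrow> int \<Rightarrow> int \<Rightarrow> gpoint" where
  "axis_point h a x = (if h then (x, a) else (a, x))"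

definition axis_edge :: "bool \<Rightarrow> int \<Rightarrow> int \<Rightarrow> gedge" where
  "axis_edge h a x = {axis_point h a x, axis_point h a (x + 1)}"

lemma axis_edge_eq_iff:
  "axis_edge h a x = axis_edge h' a' x' \<longleftrightarrow> h = h' \<and> a = a' \<and> x = x'"
proof
  assume eq: "axis_edge h a x = axis_edge h' a' x'"
  have "axis_point h a x \<in> axis_edge h' a' x'" "axis_point h a (x + 1) \<in> axis_edge h' a' x'"
    unfolding eq[symmetric] by (simp_all add: axis_edge_def)
  then show "h = h' \<and> a = a' \<and> x = x'"
    by (cases h; cases h') (auto simp: axis_edge_def axis_point_def)
qed simp

lemma horizontal_axis_edge: "horizontal (axis_edge h a x) \<longleftrightarrow> h"
proof
  assume "horizontal (axis_edge h a x)"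
  then obtain p q where pq: "axis_edge h a x = {p, q}" "p \<noteq> q" "snd p = snd q"
    unfolding horizontal_def by blast
  show h
  proof (rule ccontr)
    assume "\<not> h"
    with pq(1) have "{p, q} = {(a, x), (a, x + 1)}"
      by (simp add: axis_edge_def axis_point_def)
    with pq(2,3) show False
      by (auto simp: doubleton_eq_iff)
  qed
next
  have "(x, a) \<noteq> (x + 1, a)" by simp
  moreover assume h
  ultimately show "horizontal (axis_edge h a x)"
    unfolding horizontal_def axis_edge_def axis_point_def by force
qed

lemma grid_edge_iff_axis_edge: "grid_edge e \<longleftrightarrow> (\<exists>h a x. e = axis_edge h a x)"
proof
  assume "grid_edge e"
  then obtain p q where e: "e = {p, q}" and pq: "\<bar>fst p - fst q\<bar> + \<bar>snd p - snd q\<bar> = 1"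
    unfolding grid_edge_def by blast
  obtain a b c d where pts: "p = (a, b)" "q = (c, d)"
    by fastforce
  with pq consider "c = a + 1 \<and> d = b" | "a = c + 1 \<and> d = b"
    | "c = a \<and> d = b + 1" | "c = a \<and> b = d + 1"
    by fastforce
  then have "e = axis_edge True b a \<or> e = axis_edge True b c \<or> e = axis_edge False a b \<or>
      e = axis_edge False a d"
    by cases (auto simp: e pts axis_edge_def axis_point_def insert_commute)
  then show "\<exists>h a x. e = axis_edge h a x"
    by blast
next
  assume "\<exists>h a x. e = axis_edge h a x"
  then obtain h a x where e: "e = axis_edge h a x" by blast
  show "grid_edge e"
    unfolding grid_edge_def e axis_edge_def
    by (rule exI[of _ "axis_point h a x"], rule exI[of _ "axis_point h a (x + 1)"])
      (simp add: axis_point_def)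
qed

lemma axis_edge_through_point:
  assumes "grid_edge f" "horizontal f = h" "axis_point h a x \<in> f"
  shows "f = axis_edge h a (x - 1) \<or> f = axis_edge h a x"
proof -
  obtain h' a' x' where "f = axis_edge h' a' x'"
    using assms(1) by (auto simp: grid_edge_iff_axis_edge)
  with assms(2) have f: "f = axis_edge h a' x'"
    by (simp add: horizontal_axis_edge)
  with assms(3) have "a = a' \<and> (x = x' \<or> x = x' + 1)"
    by (cases h) (auto simp: axis_edge_def axis_point_def)
  with f show ?thesis by auto
qed

section \<open>Walks and staircases\<close>

definition walk_edges :: "(nat \<Rightarrow> gpoint) \<Rightarrow> nat \<Rightarrow> gedge list" where
  "walk_edges f L = map (\<lambda>i. {f i, f (Suc i)}) [0..<L]"

lemma set_walk_edges: "set (walk_edges f L) = {{f i, f (Suc i)} | i. i < L}"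
  by (auto simp: walk_edges_def)

lemma grid_path_walk_edges:
  assumes "0 < L" and inj: "inj_on f {..L}"
    and steps: "\<And>i. i < L \<Longrightarrow> grid_edge {f i, f (Suc i)}"
  shows "grid_path (walk_edges f L)"
proof -
  have f_eq: "f i = f j \<longleftrightarrow> i = j" if "i \<le> L" "j \<le> L" for i j
    using inj that by (auto dest: inj_onD)
  have len: "length (walk_edges f L) = L"
    by (simp add: walk_edges_def)
  have nth: "walk_edges f L ! i = {f i, f (Suc i)}" if "i < L" for i
    using that by (simp add: walk_edges_def)
  have "distinct (walk_edges f L)"
    unfolding walk_edges_def distinct_map
    by (auto simp: inj_on_def doubleton_eq_iff f_eq)
  moreover have "if j = Suc i then card (walk_edges f L ! i \<inter> walk_edges f L ! j) = 1
      else walk_edges f L ! i \<inter> walk_edges f L ! j = {}" if "i < j" "j < L" for i j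
  proof (cases "j = Suc i")
    case True
    with that have "f i \<noteq> f (Suc i)" "f i \<noteq> f (Suc j)" "f (Suc i) \<noteq> f (Suc j)"
      by (simp_all add: f_eq)
    with True have "{f i, f (Suc i)} \<inter> {f j, f (Suc j)} = {f (Suc i)}"
      by auto
    with that have "card (walk_edges f L ! i \<inter> walk_edges f L ! j) = 1"
      by (simp add: nth)
    with True show ?thesis by simp
  next
    case False
    with that show ?thesis by (auto simp: f_eq nth)
  qed
  moreover have "\<forall>e\<in>set (walk_edges f L). grid_edge e"
    using steps by (auto simp: set_walk_edges)
  moreover have "walk_edges f L \<noteq> []"
    using \<open>0 < L\<close> by (simp add: walk_edges_def)
  ultimately show ?thesis
    unfolding grid_path_def len by blast
qed

lemma bends_walk_edges:
  "bends (walk_edges f L) =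
     card {i. Suc i < L \<and> horizontal {f i, f (Suc i)} \<noteq> horizontal {f (Suc i), f (Suc (Suc i))}}"
  unfolding bends_def walk_edges_def by (auto intro: arg_cong[where f = card])

lemma card_jumps_le:
  fixes g :: "nat \<Rightarrow> nat"
  assumes "\<And>i. i < L \<Longrightarrow> g i \<le> g (Suc i)"
  shows "card {i. i < L \<and> g i \<noteq> g (Suc i)} \<le> g L - g 0"
proof -
  have "g 0 + card {i. i < L \<and> g i \<noteq> g (Suc i)} \<le> g L"
    using assms
  proof (induction L)
    case 0
    then show ?case by simp
  next
    case (Suc L)
    have "{i. i < Suc L \<and> g i \<noteq> g (Suc i)} =
        {i. i < L \<and> g i \<noteq> g (Suc i)} \<union> (if g L \<noteq> g (Suc L) then {L} else {})"
      by (auto simp: less_Suc_eq)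
    moreover have "g 0 + card {i. i < L \<and> g i \<noteq> g (Suc i)} \<le> g L" "g L \<le> g (Suc L)"
      using Suc by simp_all
    ultimately show ?case
      by (cases "g L = g (Suc L)") (simp_all add: card_insert_if)
  qed
  then show ?thesis by simp
qed

text \<open>
  The staircase with levels \<open>c 0 < c 1 < \<dots>\<close> has as \<open>j\<close>-th segment the piece of the line
  \<open>y = c j\<close> (odd \<open>j\<close>) or \<open>x = c j\<close> (even \<open>j\<close>) between the coordinates \<open>c (j - 1)\<close> and
  \<open>c (j + 1)\<close>. It is traversed by increasing coordinate sum \<open>s\<close>; the corner between segments
  \<open>j\<close> and \<open>j + 1\<close> has coordinate sum \<open>corner_sum c j\<close>.
\<close>

definition corner_sum :: "(nat \<Rightarrow> int) \<Rightarrow> nat \<Rightarrow> int" where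
  "corner_sum c j = c j + c (Suc j)"

definition stair_segment :: "(nat \<Rightarrow> int) \<Rightarrow> int \<Rightarrow> nat" where
  "stair_segment c s = (LEAST j. s < corner_sum c j)"

definition stair_point :: "(nat \<Rightarrow> int) \<Rightarrow> int \<Rightarrow> gpoint" where
  "stair_point c s = (let j = stair_segment c s in axis_point (odd j) (c j) (s - c j))"

definition staircase :: "(nat \<Rightarrow> int) \<Rightarrow> nat \<Rightarrow> gedge list" where
  "staircase c m = walk_edges (\<lambda>i. stair_point c (corner_sum c 0 + int i))
     (nat (corner_sum c m - corner_sum c 0))"

lemma corner_sum_plus_Suc: "corner_sum c 0 + int (Suc i) = corner_sum c 0 + int i + 1"
  by simp

lemma strict_mono_corner_sum: "strict_mono c \<Longrightarrow> strict_mono (corner_sum c)"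
  unfolding strict_mono_def corner_sum_def by (simp add: add_strict_mono)

lemma stair_segment_le: "s < corner_sum c j \<Longrightarrow> stair_segment c s \<le> j"
  unfolding stair_segment_def by (rule Least_le)

lemma stair_segment_eqI:
  assumes "strict_mono c" "1 \<le> j" "corner_sum c (j - 1) \<le> s" "s < corner_sum c j"
  shows "stair_segment c s = j"
proof (rule antisym)
  show "stair_segment c s \<le> j"
    using assms(4) by (rule stair_segment_le)
  show "j \<le> stair_segment c s"
  proof (rule ccontr)
    assume "\<not> j \<le> stair_segment c s"
    then have "corner_sum c (stair_segment c s) \<le> corner_sum c (j - 1)"
      using strict_mono_corner_sum[OF assms(1)] by (simp add: strict_mono_less_eq)
    moreover have "s < corner_sum c (stair_segment c s)"
      unfolding stair_segment_def by (rule LeastI) (rule assms(4))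
    ultimately show False
      using assms(3) by simp
  qed
qed

lemma stair_segment_bounds:
  assumes "strict_mono c" "corner_sum c 0 \<le> s"
  shows "1 \<le> stair_segment c s" "corner_sum c (stair_segment c s - 1) \<le> s"
    "s < corner_sum c (stair_segment c s)"
proof -
  have growth: "corner_sum c 0 + int j \<le> corner_sum c j" for j
  proof (induction j)
    case (Suc j)
    moreover have "corner_sum c j < corner_sum c (Suc j)"
      using strict_mono_corner_sum[OF assms(1)] by (simp add: strict_mono_Suc_iff)
    ultimately show ?case
      by simp
  qed simp
  have "s < corner_sum c (Suc (nat (s - corner_sum c 0)))"
    using growth[of "Suc (nat (s - corner_sum c 0))"] assms(2) by simp
  then show upper: "s < corner_sum c (stair_segment c s)"
    unfolding stair_segment_def by (rule LeastI)
  with assms(2) show "1 \<le> stair_segment c s"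
    by (cases "stair_segment c s") auto
  then show "corner_sum c (stair_segment c s - 1) \<le> s"
    using not_less_Least[of "stair_segment c s - 1" "\<lambda>j. s < corner_sum c j"]
    unfolding stair_segment_def by fastforce
qed

lemma stair_segment_mono:
  assumes "strict_mono c" "corner_sum c 0 \<le> s" "s \<le> s'"
  shows "stair_segment c s \<le> stair_segment c s'"
  using stair_segment_bounds(3)[OF assms(1), of s'] assms(2,3) by (intro stair_segment_le) simp

lemma coord_sum_stair_point: "fst (stair_point c s) + snd (stair_point c s) = s"
  by (simp add: stair_point_def axis_point_def Let_def)

lemma stair_edge:
  assumes "strict_mono c" "corner_sum c 0 \<le> s"
  defines "j \<equiv> stair_segment c s"
  shows "{stair_point c s, stair_point c (s + 1)} = axis_edge (odd j) (c j) (s - c j)"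
proof -
  have bounds: "1 \<le> j" "corner_sum c (j - 1) \<le> s" "s < corner_sum c j"
    using stair_segment_bounds[OF assms(1,2)] unfolding j_def by auto
  have "stair_point c (s + 1) = axis_point (odd j) (c j) (s + 1 - c j)"
  proof (cases "s + 1 < corner_sum c j")
    case True
    with bounds have "stair_segment c (s + 1) = j"
      by (intro stair_segment_eqI[OF assms(1)]) auto
    then show ?thesis
      by (simp add: stair_point_def)
  next
    case False
    with bounds(3) have corner: "s + 1 = c j + c (Suc j)"
      by (simp add: corner_sum_def)
    moreover have "c j < c (Suc (Suc j))"
      using assms(1) by (simp add: strict_mono_def)
    ultimately have "stair_segment c (s + 1) = Suc j"
      by (intro stair_segment_eqI[OF assms(1)]) (auto simp: corner_sum_def)
    with corner show ?thesis
      by (simp add: stair_point_def axis_point_def)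
  qed
  moreover have "stair_point c s = axis_point (odd j) (c j) (s - c j)"
    by (simp add: stair_point_def j_def Let_def)
  ultimately show ?thesis
    by (simp add: axis_edge_def diff_add_eq)
qed

lemma set_staircase:
  assumes "strict_mono c"
  shows "set (staircase c m) =
    {axis_edge (odd j) (c j) x | j x. 1 \<le> j \<and> j \<le> m \<and> c (j - 1) \<le> x \<and> x < c (Suc j)}"
proof (intro equalityI subsetI)
  fix e assume "e \<in> set (staircase c m)"
  then obtain i where i: "i < nat (corner_sum c m - corner_sum c 0)"
    and e: "e = {stair_point c (corner_sum c 0 + int i), stair_point c (corner_sum c 0 + int i + 1)}"
    unfolding staircase_def set_walk_edges corner_sum_plus_Suc by blast
  define s where "s = corner_sum c 0 + int i"
  define j where "j = stair_segment c s"
  have s0: "corner_sum c 0 \<le> s"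
    by (simp add: s_def)
  have "1 \<le> j" "corner_sum c (j - 1) \<le> s" "s < corner_sum c j"
    using stair_segment_bounds[OF assms s0] unfolding j_def by auto
  moreover have "j \<le> m"
    using i unfolding j_def s_def by (intro stair_segment_le) simp
  moreover have "e = axis_edge (odd j) (c j) (s - c j)"
    using stair_edge[OF assms s0] unfolding e s_def j_def .
  ultimately show "e \<in> {axis_edge (odd j) (c j) x | j x.
      1 \<le> j \<and> j \<le> m \<and> c (j - 1) \<le> x \<and> x < c (Suc j)}"
    by (auto simp: corner_sum_def intro!: exI[of _ j] exI[of _ "s - c j"])
next
  fix e assume "e \<in> {axis_edge (odd j) (c j) x | j x.
      1 \<le> j \<and> j \<le> m \<and> c (j - 1) \<le> x \<and> x < c (Suc j)}"
  then obtain j x where e: "e = axis_edge (odd j) (c j) x"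
    and j: "1 \<le> j" "j \<le> m" and x: "c (j - 1) \<le> x" "x < c (Suc j)"
    by blast
  define s where "s = x + c j"
  have "corner_sum c (j - 1) \<le> s" "s < corner_sum c j"
    using j x by (simp_all add: s_def corner_sum_def)
  then have seg: "stair_segment c s = j"
    using j by (intro stair_segment_eqI[OF assms]) auto
  have "corner_sum c 0 \<le> corner_sum c (j - 1)" "corner_sum c j \<le> corner_sum c m"
    using strict_mono_corner_sum[OF assms] j by (simp_all add: strict_mono_less_eq)
  with \<open>corner_sum c (j - 1) \<le> s\<close> \<open>s < corner_sum c j\<close>
  have s0: "corner_sum c 0 \<le> s" and sm: "s < corner_sum c m"
    by simp_all
  have "e = {stair_point c s, stair_point c (s + 1)}"
    using stair_edge[OF assms s0, unfolded seg] by (simp add: e s_def)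
  moreover have "corner_sum c 0 + int (nat (s - corner_sum c 0)) = s"
    using s0 by simp
  ultimately show "e \<in> set (staircase c m)"
    unfolding staircase_def set_walk_edges using s0 sm
    by (intro CollectI exI[of _ "nat (s - corner_sum c 0)"]) (simp only: corner_sum_plus_Suc, simp)
qed

lemma grid_path_staircase:
  assumes "strict_mono c" "1 \<le> m"
  shows "grid_path (staircase c m)"
  unfolding staircase_def
proof (rule grid_path_walk_edges)
  show "0 < nat (corner_sum c m - corner_sum c 0)"
    using strict_mono_corner_sum[OF assms(1)] assms(2) by (simp add: strict_mono_def)
  show "inj_on (\<lambda>i. stair_point c (corner_sum c 0 + int i)) {..nat (corner_sum c m - corner_sum c 0)}"
    by (rule inj_onI) (metis coord_sum_stair_point add_left_cancel of_nat_eq_iff)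
  fix i
  show "grid_edge {stair_point c (corner_sum c 0 + int i), stair_point c (corner_sum c 0 + int (Suc i))}"
    unfolding corner_sum_plus_Suc grid_edge_iff_axis_edge
    using stair_edge[OF assms(1), of "corner_sum c 0 + int i"] by auto
qed

lemma bends_staircase_le:
  assumes "strict_mono c" "1 \<le> m"
  shows "bends (staircase c m) \<le> m - 1"
proof -
  define f where "f i = stair_point c (corner_sum c 0 + int i)" for i
  define g where "g i = stair_segment c (corner_sum c 0 + int i)" for i
  define L where "L = nat (corner_sum c m - corner_sum c 0)"
  have horizontal_step: "horizontal {f i, f (Suc i)} \<longleftrightarrow> odd (g i)" for i
    unfolding f_def g_def corner_sum_plus_Suc
    using stair_edge[OF assms(1), of "corner_sum c 0 + int i"] by (simp add: horizontal_axis_edge)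
  have "bends (staircase c m) = card {i. Suc i < L \<and> odd (g i) \<noteq> odd (g (Suc i))}"
    unfolding staircase_def bends_walk_edges f_def[symmetric] L_def[symmetric] horizontal_step ..
  also have "\<dots> \<le> card {i. i < L - 1 \<and> g i \<noteq> g (Suc i)}"
    by (rule card_mono) auto
  also have "\<dots> \<le> g (L - 1) - g 0"
    by (rule card_jumps_le) (simp add: g_def stair_segment_mono[OF assms(1)])
  also have "\<dots> \<le> m - 1"
  proof -
    have "0 < L"
      using strict_mono_corner_sum[OF assms(1)] assms(2) by (simp add: L_def strict_mono_def)
    then have "g (L - 1) \<le> m"
      unfolding g_def L_def by (intro stair_segment_le) linarith
    moreover have "1 \<le> g 0"
      using stair_segment_bounds(1)[OF assms(1)] by (simp add: g_def)
    ultimately show ?thesis by simp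
  qed
  finally show ?thesis .
qed

lemma ex_maximal_clique_superset:
  assumes "finite V" "clique V E C"
  shows "\<exists>D. maximal_clique V E D \<and> C \<subseteq> D"
proof -
  have "\<exists>D. (clique V E D \<and> C \<subseteq> D) \<and> (\<forall>D'. clique V E D' \<and> C \<subseteq> D' \<longrightarrow> card D' \<le> card D)"
  proof (rule ex_has_greatest_nat[where b = "Suc (card V)"])
    show "clique V E C \<and> C \<subseteq> C"
      using assms(2) by simp
    show "\<forall>D. clique V E D \<and> C \<subseteq> D \<longrightarrow> card D < Suc (card V)"
      using assms(1) by (auto simp: clique_def intro: card_mono le_imp_less_Suc)
  qed
  then obtain D where D: "clique V E D" "C \<subseteq> D"
    and largest: "\<And>D'. clique V E D' \<Longrightarrow> C \<subseteq> D' \<Longrightarrow> card D' \<le> card D"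
    by blast
  have "D' = D" if "clique V E D'" "D \<subseteq> D'" for D'
  proof -
    have "finite D'"
      using that(1) assms(1) by (auto simp: clique_def intro: finite_subset)
    moreover have "card D' \<le> card D"
      using that D(2) largest by blast
    moreover have "card D \<le> card D'"
      using \<open>finite D'\<close> that(2) by (rule card_mono)
    ultimately show ?thesis
      using card_subset_eq[of D' D] that(2) by simp
  qed
  with D show ?thesis
    unfolding maximal_clique_def by blast
qed

lemma finite_maximal_cliques: "finite V \<Longrightarrow> finite {C. maximal_clique V E C}"
  by (rule finite_subset[of _ "Pow V"]) (auto simp: maximal_clique_def clique_def)

lemma card_maximal_cliques_gt_0: "finite V \<Longrightarrow> 0 < card {C. maximal_clique V E C}"
  using ex_maximal_clique_superset[of V E "{}"] finite_maximal_cliques[of V E]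
  by (auto simp: clique_def card_gt_0_iff)

section \<open>The upper bound\<close>

lemma helly_epg_rep_if_clique_edges:
  assumes "finite V" and sym: "\<And>u v. E u v \<Longrightarrow> E v u"
    and paths: "\<forall>v\<in>V. grid_path (P v)"
    and cliques: "\<And>j. j \<in> J \<Longrightarrow> clique V E (K j)"
    and cover: "\<And>C. maximal_clique V E C \<Longrightarrow> \<exists>j\<in>J. C = K j"
    and clique_edge: "\<And>j v. j \<in> J \<Longrightarrow> v \<in> K j \<Longrightarrow> ce j \<in> set (P v)"
    and shared: "\<And>u v. u \<in> V \<Longrightarrow> v \<in> V \<Longrightarrow> u \<noteq> v \<Longrightarrow> set (P u) \<inter> set (P v) \<noteq> {} \<Longrightarrow>
      \<exists>j\<in>J. u \<in> K j \<and> v \<in> K j"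
  shows "epg_rep V E P \<and> helly_rep V P"
proof
  have in_clique: "\<exists>j\<in>J. S \<subseteq> K j" if "clique V E S" for S
    using ex_maximal_clique_superset[OF \<open>finite V\<close> that] cover by blast
  have adj: "E u v \<longleftrightarrow> set (P u) \<inter> set (P v) \<noteq> {}" if "u \<in> V" "v \<in> V" "u \<noteq> v" for u v
  proof
    assume "E u v"
    with that sym have "clique V E {u, v}"
      by (auto simp: clique_def)
    then obtain j where "j \<in> J" "{u, v} \<subseteq> K j"
      using in_clique by blast
    then show "set (P u) \<inter> set (P v) \<noteq> {}"
      using clique_edge by blast
  next
    assume "set (P u) \<inter> set (P v) \<noteq> {}"
    with that shared cliques show "E u v"
      by (fastforce simp: clique_def)
  qed
  with paths show "epg_rep V E P"
    by (simp add: epg_rep_def)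
  show "helly_rep V P"
    unfolding helly_rep_def
  proof (intro allI impI)
    fix S assume "S \<subseteq> V" "\<forall>u\<in>S. \<forall>v\<in>S. set (P u) \<inter> set (P v) \<noteq> {}"
    with adj have "clique V E S"
      unfolding clique_def by blast
    then obtain j where "j \<in> J" "S \<subseteq> K j"
      using in_clique by blast
    then show "\<exists>e. \<forall>v\<in>S. e \<in> set (P v)"
      using clique_edge by blast
  qed
qed

text \<open>
  Levels are spaced \<open>n + 1\<close> apart, so the offset \<open>idx v + 1 \<le> n\<close> of a vertex outside
  \<open>K j\<close> keeps its level strictly between \<open>(n + 1) j\<close> and \<open>(n + 1) (j + 1)\<close> and distinct from
  the levels of all other vertices.
\<close>

definition clique_level :: "nat \<Rightarrow> (nat \<Rightarrow> 'a set) \<Rightarrow> ('a \<Rightarrow> nat) \<Rightarrow> 'a \<Rightarrow> nat \<Rightarrow> int" where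
  "clique_level n K idx v j = int (Suc n) * int j + (if v \<in> K j then 0 else int (idx v) + 1)"

lemma strict_mono_clique_level:
  assumes "idx v < n"
  shows "strict_mono (clique_level n K idx v)"
  unfolding strict_mono_Suc_iff clique_level_def using assms by (auto simp: algebra_simps)

lemma clique_level_eq:
  assumes "idx u < n" "idx v < n" "clique_level n K idx u j = clique_level n K idx v j'"
  shows "j = j' \<and> (u \<in> K j \<and> v \<in> K j \<or> idx u = idx v)"
proof -
  define offset where "offset w i = (if w \<in> K i then 0 else int (idx w) + 1)" for w i
  have level: "clique_level n K idx w i = int (Suc n) * int i + offset w i" for w i
    by (simp add: clique_level_def offset_def)
  have quotient: "(int (Suc n) * int i + offset w i) div int (Suc n) = int i" if "idx w < n" for w i
    using that by (simp add: offset_def)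
  have "int j = int j'"
    using assms(3) by (metis level quotient[OF assms(1)] quotient[OF assms(2)])
  then have "j = j'"
    by simp
  with assms(3) have "offset u j = offset v j"
    by (simp add: level)
  with \<open>j = j'\<close> show ?thesis
    by (auto simp: offset_def split: if_splits)
qed

lemma clique_edge_in_staircase:
  assumes "idx v < n" "1 \<le> j" "j \<le> m" "v \<in> K j"
  shows "axis_edge (odd j) (int (Suc n) * int j) (int (Suc n) * int j)
    \<in> set (staircase (clique_level n K idx v) m)"
proof -
  let ?c = "clique_level n K idx v"
  have "?c j = int (Suc n) * int j"
    using assms(4) by (simp add: clique_level_def)
  moreover have "?c (j - 1) \<le> int (Suc n) * int j"
    using assms(1,2) by (simp add: clique_level_def of_nat_diff algebra_simps)
  moreover have "int (Suc n) * int j < ?c (Suc j)"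
    by (simp add: clique_level_def algebra_simps)
  ultimately have "\<exists>j' x. axis_edge (odd j) (int (Suc n) * int j) (int (Suc n) * int j) =
      axis_edge (odd j') (?c j') x \<and> 1 \<le> j' \<and> j' \<le> m \<and> ?c (j' - 1) \<le> x \<and> x < ?c (Suc j')"
    using assms(2,3) by (intro exI[of _ j] exI[of _ "int (Suc n) * int j"]) simp
  then show ?thesis
    unfolding set_staircase[OF strict_mono_clique_level[where idx = idx and v = v, OF assms(1)]]
    by blast
qed

lemma ex_helly_staircase_rep:
  assumes "finite V" and sym: "\<And>u v. E u v \<Longrightarrow> E v u"
  shows "\<exists>P. helly_Bk_epg (card {C. maximal_clique V E C} - 1) V E P"
proof -
  define m where "m = card {C. maximal_clique V E C}"
  define n where "n = card V"
  have "1 \<le> m"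
    using card_maximal_cliques_gt_0[of V E, OF assms(1)] by (simp add: m_def)
  obtain K where K: "bij_betw K {1..m} {C. maximal_clique V E C}"
    using ex_bij_betw_nat_finite_1[OF finite_maximal_cliques[OF assms(1)]] unfolding m_def by blast
  obtain idx where "bij_betw idx V {0..<n}"
    using ex_bij_betw_finite_nat[OF assms(1)] unfolding n_def by blast
  then have idx_lt: "\<And>v. v \<in> V \<Longrightarrow> idx v < n" and "inj_on idx V"
    by (auto simp: bij_betw_def)
  define P where "P v = staircase (clique_level n K idx v) m" for v
  have "epg_rep V E P \<and> helly_rep V P"
  proof (rule helly_epg_rep_if_clique_edges[OF assms(1) sym, where J = "{1..m}" and K = K])
    show "\<forall>v\<in>V. grid_path (P v)"
      using \<open>1 \<le> m\<close> by (simp add: P_def grid_path_staircase strict_mono_clique_level idx_lt)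
    show "clique V E (K j)" if "j \<in> {1..m}" for j
      using K that by (auto simp: bij_betw_def maximal_clique_def)
    show "\<exists>j\<in>{1..m}. C = K j" if "maximal_clique V E C" for C
      using K that by (auto simp: bij_betw_def)
    show "axis_edge (odd j) (int (Suc n) * int j) (int (Suc n) * int j) \<in> set (P v)"
      if "j \<in> {1..m}" "v \<in> K j" for j v
    proof -
      have "v \<in> V"
        using K that by (auto simp: bij_betw_def maximal_clique_def clique_def)
      with that show ?thesis
        unfolding P_def by (intro clique_edge_in_staircase idx_lt) auto
    qed
    show "\<exists>j\<in>{1..m}. u \<in> K j \<and> v \<in> K j"
      if u: "u \<in> V" and v: "v \<in> V" and "u \<noteq> v" and "set (P u) \<inter> set (P v) \<noteq> {}" for u v
    proof -
      from \<open>set (P u) \<inter> set (P v) \<noteq> {}\<close> obtain j x j' x' where j: "1 \<le> j" "j \<le> m"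
        and same: "axis_edge (odd j) (clique_level n K idx u j) x =
          axis_edge (odd j') (clique_level n K idx v j') x'"
        unfolding P_def set_staircase[OF strict_mono_clique_level[where idx = idx, OF idx_lt[OF u]]]
          set_staircase[OF strict_mono_clique_level[where idx = idx, OF idx_lt[OF v]]]
        by blast
      have "j = j' \<and> (u \<in> K j \<and> v \<in> K j \<or> idx u = idx v)"
        using same
        by (intro clique_level_eq[where idx = idx, OF idx_lt[OF u] idx_lt[OF v]])
          (simp add: axis_edge_eq_iff)
      with u v \<open>u \<noteq> v\<close> j \<open>inj_on idx V\<close> show ?thesis
        by (auto dest: inj_onD)
    qed
  qed
  moreover have "bends (P v) \<le> m - 1" if "v \<in> V" for v
    unfolding P_def using that \<open>1 \<le> m\<close>
    by (intro bends_staircase_le strict_mono_clique_level idx_lt)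
  ultimately have "helly_Bk_epg (m - 1) V E P"
    by (simp add: helly_Bk_epg_def)
  then show ?thesis
    unfolding m_def by blast
qed

lemma helly_bend_le: "helly_Bk_epg k V E P \<Longrightarrow> helly_bend V E \<le> k"
  unfolding helly_bend_def by (rule Least_le) blast

lemma ex_helly_rep_helly_bend:
  "helly_Bk_epg k V E P \<Longrightarrow> \<exists>Q. helly_Bk_epg (helly_bend V E) V E Q"
  unfolding helly_bend_def by (rule LeastI[of "\<lambda>k. \<exists>P. helly_Bk_epg k V E P"]) blast

section \<open>The lower bound\<close>

definition bend_indices :: "gedge list \<Rightarrow> nat set" where
  "bend_indices es = {i. Suc i < length es \<and> horizontal (es ! i) \<noteq> horizontal (es ! Suc i)}"

definition segment_ends :: "gedge list \<Rightarrow> nat set" where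
  "segment_ends es = {0, length es - 1} \<union> bend_indices es \<union> Suc ` bend_indices es"

lemma finite_bend_indices: "finite (bend_indices es)"
  by (rule finite_subset[of _ "{..<length es}"]) (auto simp: bend_indices_def)

lemma finite_segment_ends: "finite (segment_ends es)"
  by (simp add: segment_ends_def finite_bend_indices)

lemma card_segment_ends_le: "card (segment_ends es) \<le> 2 * bends es + 2"
proof -
  have "card (segment_ends es) \<le>
      card {0, length es - 1} + card (bend_indices es) + card (Suc ` bend_indices es)"
    unfolding segment_ends_def by (meson card_Un_le add_le_mono1 order_trans)
  also have "\<dots> \<le> 2 + card (bend_indices es) + card (bend_indices es)"
    using card_image_le[OF finite_bend_indices, of Suc es] by (simp add: card_insert_if)
  finally show ?thesis
    by (simp add: bends_def bend_indices_def)
qed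

lemma grid_path_consecutive:
  assumes "grid_path es" "Suc i < length es"
  shows "card (es ! i \<inter> es ! Suc i) = 1"
proof -
  have "\<forall>i j. i < j \<and> j < length es \<longrightarrow>
      (if j = Suc i then card (es ! i \<inter> es ! j) = 1 else es ! i \<inter> es ! j = {})"
    using assms(1) by (simp add: grid_path_def)
  from this[rule_format, of i "Suc i"] assms(2) show ?thesis
    by simp
qed

lemma grid_path_nonconsecutive:
  assumes "grid_path es" "Suc i < j" "j < length es"
  shows "es ! i \<inter> es ! j = {}"
proof -
  have "\<forall>i j. i < j \<and> j < length es \<longrightarrow>
      (if j = Suc i then card (es ! i \<inter> es ! j) = 1 else es ! i \<inter> es ! j = {})"
    using assms(1) by (simp add: grid_path_def)
  from this[rule_format, of i j] assms(2,3) show ?thesis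
    by simp
qed

lemma segment_endsI:
  assumes path: "grid_path es" and i: "i < length es" and edge: "es ! i = axis_edge h a x"
    and predecessor: "axis_edge h a (x - 1) \<notin> set es"
  shows "i \<in> segment_ends es"
proof (rule ccontr)
  assume "i \<notin> segment_ends es"
  then have "i \<noteq> 0" "i \<noteq> length es - 1"
    and no_bend: "i \<notin> bend_indices es" "i \<notin> Suc ` bend_indices es"
    by (auto simp: segment_ends_def)
  then obtain k where k: "i = Suc k" "Suc i < length es"
    using i by (cases i) auto
  with i no_bend have straight: "horizontal (es ! k) = h" "horizontal (es ! Suc i) = h"
    using edge by (auto simp: bend_indices_def horizontal_axis_edge)
  have meet: "es ! k \<inter> es ! i \<noteq> {}" "es ! i \<inter> es ! Suc i \<noteq> {}"
    and apart: "es ! k \<inter> es ! Suc i = {}"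
    using grid_path_consecutive[OF path, of k] grid_path_consecutive[OF path, of i]
      grid_path_nonconsecutive[OF path, of k "Suc i"] k
    by auto
  have "axis_point h a x \<in> es ! k \<or> axis_point h a x \<in> es ! Suc i"
    using meet[unfolded edge axis_edge_def] apart by blast
  then obtain l where l: "l = k \<or> l = Suc i" "axis_point h a x \<in> es ! l"
    by blast
  with k have "l < length es" "l \<noteq> i" "horizontal (es ! l) = h"
    using straight by auto
  moreover have "grid_edge (es ! l)" "distinct es"
    using path \<open>l < length es\<close> by (auto simp: grid_path_def)
  ultimately have "es ! l = axis_edge h a (x - 1)"
    using axis_edge_through_point[OF _ _ l(2)] i edge by (metis nth_eq_iff_index_eq)
  with \<open>l < length es\<close> predecessor show False
    by (metis nth_mem)
qed

lemma ex_common_edge_with_missing_predecessor: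
  fixes P :: "'a \<Rightarrow> gedge list"
  assumes "w \<in> C" and common: "\<forall>v\<in>C. axis_edge h a x \<in> set (P v)"
  shows "\<exists>y. (\<forall>v\<in>C. axis_edge h a y \<in> set (P v)) \<and>
    (\<exists>v\<in>C. axis_edge h a (y - 1) \<notin> set (P v))"
proof -
  let ?edge = "\<lambda>t::nat. axis_edge h a (x - int t - 1)"
  have "\<exists>t. ?edge t \<notin> set (P w)"
  proof (rule ccontr)
    assume "\<not> ?thesis"
    then have "range ?edge \<subseteq> set (P w)"
      by blast
    moreover have "inj ?edge"
      by (auto simp: inj_def axis_edge_eq_iff)
    ultimately show False
      by (meson finite_imageD finite_set infinite_UNIV_nat rev_finite_subset)
  qed
  with \<open>w \<in> C\<close> have ex: "\<exists>t. \<exists>v\<in>C. ?edge t \<notin> set (P v)"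
    by blast
  define t where "t = (LEAST t. \<exists>v\<in>C. ?edge t \<notin> set (P v))"
  have "\<exists>v\<in>C. ?edge t \<notin> set (P v)"
    unfolding t_def by (rule LeastI_ex[OF ex])
  moreover have "\<forall>v\<in>C. axis_edge h a (x - int t) \<in> set (P v)"
  proof (cases t)
    case 0
    with common show ?thesis by simp
  next
    case (Suc t')
    then have "\<forall>v\<in>C. ?edge t' \<in> set (P v)"
      using not_less_Least[of t' "\<lambda>t. \<exists>v\<in>C. ?edge t \<notin> set (P v)"] unfolding t_def by auto
    with Suc show ?thesis
      by (simp add: algebra_simps)
  qed
  ultimately show ?thesis
    by (intro exI[of _ "x - int t"]) auto
qed

lemma edge_users_eq_maximal_clique:
  assumes "epg_rep V E P" "maximal_clique V E C" "\<forall>v\<in>C. e \<in> set (P v)"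
  shows "{w \<in> V. e \<in> set (P w)} = C"
proof -
  have "clique V E {w \<in> V. e \<in> set (P w)}"
    using assms(1) by (auto simp: clique_def epg_rep_def)
  moreover have "C \<subseteq> {w \<in> V. e \<in> set (P w)}"
    using assms(2,3) by (auto simp: maximal_clique_def clique_def)
  ultimately show ?thesis
    using assms(2) by (simp add: maximal_clique_def)
qed

lemma maximal_clique_at_segment_end:
  assumes "V \<noteq> {}" and rep: "epg_rep V E P" "helly_rep V P" and C: "maximal_clique V E C"
  shows "\<exists>v\<in>V. \<exists>i\<in>segment_ends (P v). C = {w \<in> V. P v ! i \<in> set (P w)}"
proof -
  have paths: "\<And>v. v \<in> V \<Longrightarrow> grid_path (P v)"
    using rep(1) by (simp add: epg_rep_def)
  have "C \<subseteq> V"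
    using C by (simp add: maximal_clique_def clique_def)
  obtain w where "w \<in> C"
  proof -
    obtain u where "u \<in> V"
      using assms(1) by blast
    then have "clique V E {u}"
      by (simp add: clique_def)
    with C show ?thesis
      using that unfolding maximal_clique_def by blast
  qed
  have pairwise: "\<forall>u\<in>C. \<forall>v\<in>C. set (P u) \<inter> set (P v) \<noteq> {}"
  proof (intro ballI)
    fix u v assume "u \<in> C" "v \<in> C"
    with \<open>C \<subseteq> V\<close> paths have "P u \<noteq> []"
      by (auto simp: grid_path_def)
    show "set (P u) \<inter> set (P v) \<noteq> {}"
    proof (cases "u = v")
      case True
      with \<open>P u \<noteq> []\<close> show ?thesis
        by simp
    next
      case False
      with \<open>u \<in> C\<close> \<open>v \<in> C\<close> C have "E u v"
        by (simp add: maximal_clique_def clique_def)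
      with False \<open>u \<in> C\<close> \<open>v \<in> C\<close> \<open>C \<subseteq> V\<close> rep(1) show ?thesis
        unfolding epg_rep_def by blast
    qed
  qed
  obtain e where e: "\<forall>v\<in>C. e \<in> set (P v)"
    using rep(2)[unfolded helly_rep_def, rule_format, OF \<open>C \<subseteq> V\<close> pairwise[rule_format]] by blast
  with \<open>w \<in> C\<close> \<open>C \<subseteq> V\<close> paths have "grid_edge e"
    by (auto simp: grid_path_def)
  then obtain h a x where "e = axis_edge h a x"
    by (auto simp: grid_edge_iff_axis_edge)
  with e have "\<forall>v\<in>C. axis_edge h a x \<in> set (P v)"
    by simp
  then obtain y v where common: "\<forall>u\<in>C. axis_edge h a y \<in> set (P u)"
    and v: "v \<in> C" "axis_edge h a (y - 1) \<notin> set (P v)"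
    using ex_common_edge_with_missing_predecessor[OF \<open>w \<in> C\<close>] by blast
  then obtain i where i: "i < length (P v)" "P v ! i = axis_edge h a y"
    by (meson in_set_conv_nth)
  have "i \<in> segment_ends (P v)"
    using paths \<open>C \<subseteq> V\<close> v i by (intro segment_endsI) auto
  moreover have "{w \<in> V. P v ! i \<in> set (P w)} = C"
    using edge_users_eq_maximal_clique[OF rep(1) C] common i(2) by simp
  ultimately show ?thesis
    using v(1) \<open>C \<subseteq> V\<close> by blast
qed

lemma card_maximal_cliques_le:
  assumes "finite V" "V \<noteq> {}" "helly_Bk_epg k V E P"
  shows "card {C. maximal_clique V E C} \<le> card V * (2 * k + 2)"
proof -
  have rep: "epg_rep V E P" "helly_rep V P" and bends: "\<forall>v\<in>V. bends (P v) \<le> k"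
    using assms(3) unfolding helly_Bk_epg_def by blast+
  have "card {C. maximal_clique V E C} \<le> card (SIGMA v:V. segment_ends (P v))"
  proof (rule surj_card_le)
    show "finite (SIGMA v:V. segment_ends (P v))"
      using assms(1) by (simp add: finite_segment_ends)
    show "{C. maximal_clique V E C} \<subseteq>
      (\<lambda>(v, i). {w \<in> V. P v ! i \<in> set (P w)}) ` (SIGMA v:V. segment_ends (P v))"
    proof
      fix C assume "C \<in> {C. maximal_clique V E C}"
      then obtain v i where "v \<in> V" "i \<in> segment_ends (P v)" "C = {w \<in> V. P v ! i \<in> set (P w)}"
        using maximal_clique_at_segment_end[OF assms(2) rep] by blast
      then show "C \<in> (\<lambda>(v, i). {w \<in> V. P v ! i \<in> set (P w)}) ` (SIGMA v:V. segment_ends (P v))"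
        by (intro image_eqI[of _ _ "(v, i)"]) auto
    qed
  qed
  also have "\<dots> = (\<Sum>v\<in>V. card (segment_ends (P v)))"
    using assms(1) by (simp add: finite_segment_ends)
  also have "\<dots> \<le> (\<Sum>v\<in>V. 2 * k + 2)"
    using bends card_segment_ends_le
    by (intro sum_mono) (meson add_le_mono1 mult_le_mono2 order_trans)
  finally show ?thesis
    by simp
qed

lemma card_maximal_cliques_le_helly_bend:
  assumes "finite V" "V \<noteq> {}" "\<And>u v. E u v \<Longrightarrow> E v u"
  shows "card {C. maximal_clique V E C} \<le> card V * (2 * helly_bend V E + 2)"
proof -
  obtain P where "helly_Bk_epg (card {C. maximal_clique V E C} - 1) V E P"
    using ex_helly_staircase_rep[of V E, OF assms(1,3)] by blast
  then obtain Q where "helly_Bk_epg (helly_bend V E) V E Q"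
    using ex_helly_rep_helly_bend by blast
  then show ?thesis
    by (rule card_maximal_cliques_le[OF assms(1,2)])
qed

theorem theorem3p1:
  fixes V :: "'a set" and E :: "'a \<Rightarrow> 'a \<Rightarrow> bool"
  assumes "finite V"
    and "\<And>u v. E u v \<Longrightarrow> E v u"
    and "\<And>v. \<not> E v v"
  defines "n \<equiv> card V"
    and "\<mu> \<equiv> card {C. maximal_clique V E C}"
  shows "real \<mu> / (2 * real n) - 1 \<le> real (helly_bend V E)
       \<and> real (helly_bend V E) \<le> real \<mu> - 1"
proof
  obtain P where "helly_Bk_epg (\<mu> - 1) V E P"
    using ex_helly_staircase_rep[of V E, OF assms(1,2)] unfolding \<mu>_def by blast
  then have "helly_bend V E \<le> \<mu> - 1"
    by (rule helly_bend_le)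
  moreover have "0 < \<mu>"
    unfolding \<mu>_def using assms(1) by (rule card_maximal_cliques_gt_0)
  ultimately show "real (helly_bend V E) \<le> real \<mu> - 1"
    by linarith
  show "real \<mu> / (2 * real n) - 1 \<le> real (helly_bend V E)"
  proof (cases "V = {}")
    case False
    then have "0 < real n"
      using assms(1) by (simp add: n_def card_gt_0_iff)
    have "\<mu> \<le> n * (2 * helly_bend V E + 2)"
      unfolding \<mu>_def n_def using assms(1) False assms(2)
      by (rule card_maximal_cliques_le_helly_bend)
    then have "real \<mu> \<le> (real (helly_bend V E) + 1) * (2 * real n)"
      by (rule order_trans[OF of_nat_mono]) (simp add: algebra_simps)
    with \<open>0 < real n\<close> have "real \<mu> / (2 * real n) \<le> real (helly_bend V E) + 1"
      by (simp add: divide_le_eq)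
    then show ?thesis
      by simp
  qed (simp add: n_def)
qed

end
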